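(* Let $G$ be a graph, $q\in\mathcal Q(G)$, $F$ a graph with $F\to G$, and let $T_n$ ($n\ge1$) be the graphs defined below. Then \[ \lim_{n\to\infty}\log_n\hom(F,T_n)=\max_{\varphi\in\mathsf{Hom}(F,G)}\sum_{A\subseteq V_G} q(A)\cdot\mathsf{CC}\big(F|_{\varphi^{-1}(A)}\big). \]
   Context: Graphs are finite directed graphs $G=(V_G,E_G)$ with $V_G$ nonempty finite and $E_G\subseteq V_G\times V_G$. Homomorphisms are vertex maps sending edges to edges; $\mathsf{Hom}(F,G)$ is their set, $\hom$ its size, $F\to G$ means $\hom(F,G)\ge 1$. $F|_B$ is the induced subgraph on $B$ and $\mathsf{CC}$ the number of connected components ignoring directions, with $\mathsf{CC}(F|_\emptyset)=0$. $\mathcal Q(G)$ is the set of $q:\wp(V_G)\to\mathbb R$ with $q(\emptyset)=0$, $q\ge0$, and $\sum_{A\subseteq V_G}q(A)\,\mathsf{CC}(G|_A)=1$. For $q\in\mathcal Q(G)$ and $n\ge1$, $T_n$ is the graph whose vertices are pairs $(x,i)$ with $x\in V_G$ and $i:\{A\subseteq V_G:x\in A\}\to\{0,1,2,\dots\}$ with $i(A)<n^{q(A)}$, and with an edge from $(x,i)$ to $(y,j)$ iff $(x,y)\in E_G$ and $i(A)=j(A)$ for every $A$ with $\{x,y\}\subseteq A\subseteq V_G$. *)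

theory Defs
  imports Complex_Main "HOL-Library.FuncSet"
begin

type_synonym 'a graph = "'a set \<times> ('a \<times> 'a) set"

definition verts :: "'a graph \<Rightarrow> 'a set" where "verts G = fst G"
definition edges :: "'a graph \<Rightarrow> ('a \<times> 'a) set" where "edges G = snd G"

definition is_graph :: "'a graph \<Rightarrow> bool" where
  "is_graph G \<longleftrightarrow> finite (verts G) \<and> verts G \<noteq> {} \<and> edges G \<subseteq> verts G \<times> verts G"

definition Hom :: "'a graph \<Rightarrow> 'b graph \<Rightarrow> ('a \<Rightarrow> 'b) set" where
  "Hom F G = {\<phi> \<in> verts F \<rightarrow>\<^sub>E verts G. \<forall>(u,v)\<in>edges F. (\<phi> u, \<phi> v) \<in> edges G}"

definition hom :: "'a graph \<Rightarrow> 'b graph \<Rightarrow> nat" where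
  "hom F G = card (Hom F G)"

definition maps_to :: "'a graph \<Rightarrow> 'b graph \<Rightarrow> bool" (infix "\<rightarrow>\<^sub>G" 50) where
  "F \<rightarrow>\<^sub>G G \<longleftrightarrow> hom F G \<ge> 1"

definition induced :: "'a graph \<Rightarrow> 'a set \<Rightarrow> 'a graph" where
  "induced F B = (B, edges F \<inter> (B \<times> B))"

definition CC :: "'a graph \<Rightarrow> nat" where
  "CC H = card (verts H // ((edges H \<union> (edges H)\<inverse>)\<^sup>*))"

definition Qset :: "'b graph \<Rightarrow> ('b set \<Rightarrow> real) set" where
  "Qset G = {q. q {} = 0 \<and> (\<forall>A \<subseteq> verts G. q A \<ge> 0) \<and>
               (\<Sum>A \<in> Pow (verts G). q A * real (CC (induced G A))) = 1}"

text \<open>The graph T_n. The index function i is represented by a total function that is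
  0 outside its domain {A \<subseteq> V_G. x \<in> A}.\<close>
definition Tn :: "'b graph \<Rightarrow> ('b set \<Rightarrow> real) \<Rightarrow> nat \<Rightarrow> ('b \<times> ('b set \<Rightarrow> nat)) graph" where
  "Tn G q n =
    ({(x, i). x \<in> verts G \<and>
        (\<forall>A. (A \<subseteq> verts G \<and> x \<in> A) \<longrightarrow> real (i A) < real n powr q A) \<and>
        (\<forall>A. \<not> (A \<subseteq> verts G \<and> x \<in> A) \<longrightarrow> i A = 0)},
     {((x, i), (y, j)). (x, y) \<in> edges G \<and>
        (\<forall>A. (A \<subseteq> verts G \<and> x \<in> A) \<longrightarrow> real (i A) < real n powr q A) \<and>
        (\<forall>A. \<not> (A \<subseteq> verts G \<and> x \<in> A) \<longrightarrow> i A = 0) \<and>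
        (\<forall>A. (A \<subseteq> verts G \<and> y \<in> A) \<longrightarrow> real (j A) < real n powr q A) \<and>
        (\<forall>A. \<not> (A \<subseteq> verts G \<and> y \<in> A) \<longrightarrow> j A = 0) \<and>
        (\<forall>A. {x, y} \<subseteq> A \<and> A \<subseteq> verts G \<longrightarrow> i A = j A)})"

end

theory Submission
  imports Defs
begin

(* A vertex (x, i) of T_n lies over the vertex x of G and carries, for every A \<subseteq> V_G containing x,
   a level i(A) < n^q(A); an edge of T_n lies over an edge (x, y) of G and keeps the levels of all
   sets A \<supseteq> {x, y}.  Hence a homomorphism \<psi> : F \<rightarrow> T_n is the same thing as a homomorphism
   \<phi> : F \<rightarrow> G (its first component) together with a choice, for every A \<subseteq> V_G, of one level
   for each weakly connected component of F|\<phi>\<^sup>-\<^sup>1(A): levels are constant along edges inside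
   \<phi>\<^sup>-\<^sup>1(A) and otherwise unconstrained.  This bijection gives the exact count
      hom(F, T_n) = \<Sum>\<^sub>\<phi> \<Prod>\<^sub>A \<lceil>n^q(A)\<rceil>^CC(F|\<phi>\<^sup>-\<^sup>1(A)).
   Since 1 \<le> x \<le> \<lceil>x\<rceil> \<le> 2x for x = n^q(A) \<ge> 1, the summand for \<phi> lies between n^s(\<phi>) and
   2^K(\<phi>) n^s(\<phi>), where s(\<phi>) is the weight in the statement and K(\<phi>) does not depend on n.
   A general analytic lemma, log_n of a finite sum of such terms tends to the largest exponent,
   then yields the theorem. *)

section \<open>Homomorphisms and components of induced subgraphs\<close>

lemma finite_Hom: "is_graph F \<Longrightarrow> is_graph G \<Longrightarrow> finite (Hom F G)"
proof -
  assume "is_graph F" "is_graph G"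
  then have "finite (verts F \<rightarrow>\<^sub>E verts G)" by (simp add: is_graph_def finite_PiE)
  then show ?thesis by (rule rev_finite_subset) (auto simp: Hom_def)
qed

definition vertex_preimage :: "'a graph \<Rightarrow> ('a \<Rightarrow> 'b) \<Rightarrow> 'b set \<Rightarrow> 'a set" where
  "vertex_preimage F \<phi> A = {v \<in> verts F. \<phi> v \<in> A}"

definition conn :: "'a graph \<Rightarrow> 'a set \<Rightarrow> ('a \<times> 'a) set" where
  "conn F B = (edges (induced F B) \<union> (edges (induced F B))\<inverse>)\<^sup>*"

definition components :: "'a graph \<Rightarrow> 'a set \<Rightarrow> 'a set set" where
  "components F B = B // conn F B"

lemma CC_induced_eq_card_components: "CC (induced F B) = card (components F B)"
  by (simp add: CC_def conn_def components_def verts_def induced_def)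

lemma conn_sym: "(x, y) \<in> conn F B \<Longrightarrow> (y, x) \<in> conn F B"
proof -
  have "sym (edges (induced F B) \<union> (edges (induced F B))\<inverse>)" by (auto simp: sym_def)
  then have "sym (conn F B)" unfolding conn_def by (rule sym_rtrancl)
  then show "(x, y) \<in> conn F B \<Longrightarrow> (y, x) \<in> conn F B" by (auto dest: symD)
qed

lemma conn_trans: "(x, y) \<in> conn F B \<Longrightarrow> (y, z) \<in> conn F B \<Longrightarrow> (x, z) \<in> conn F B"
  unfolding conn_def by (rule rtrancl_trans)

lemma conn_closed: "(x, y) \<in> conn F B \<Longrightarrow> x \<in> B \<Longrightarrow> y \<in> B"
  unfolding conn_def by (induction rule: rtrancl_induct) (auto simp: induced_def edges_def)

lemma conn_edge: "(u, v) \<in> edges F \<Longrightarrow> u \<in> B \<Longrightarrow> v \<in> B \<Longrightarrow> (u, v) \<in> conn F B"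
  unfolding conn_def by (rule r_into_rtrancl) (auto simp: induced_def edges_def)

lemma component_cases:
  assumes "c \<in> components F B"
  obtains v where "v \<in> B" "c = conn F B `` {v}"
  using assms unfolding components_def quotient_def by blast

lemma component_subset: "c \<in> components F B \<Longrightarrow> c \<subseteq> B"
  unfolding components_def quotient_def by (auto intro: conn_closed)

lemma component_some_member:
  assumes "c \<in> components F B"
  shows "(SOME v. v \<in> c) \<in> c"
proof (rule someI_ex)
  obtain v where "v \<in> B" "c = conn F B `` {v}" using assms by (rule component_cases)
  then show "\<exists>v. v \<in> c" by (auto simp: conn_def)
qed

lemma component_of_vertex: "v \<in> B \<Longrightarrow> conn F B `` {v} \<in> components F B"
  unfolding components_def by (rule quotientI)

lemma finite_components: "finite B \<Longrightarrow> finite (components F B)"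
  unfolding components_def quotient_def by auto

lemma mem_verts_Tn:
  "(x, i) \<in> verts (Tn G q n) \<longleftrightarrow> x \<in> verts G \<and>
     (\<forall>A. A \<subseteq> verts G \<and> x \<in> A \<longrightarrow> real (i A) < real n powr q A) \<and>
     (\<forall>A. \<not> (A \<subseteq> verts G \<and> x \<in> A) \<longrightarrow> i A = 0)"
  by (simp add: Tn_def verts_def)

lemma mem_edges_Tn:
  assumes "is_graph G"
  shows "((x, i), (y, j)) \<in> edges (Tn G q n) \<longleftrightarrow>
     (x, i) \<in> verts (Tn G q n) \<and> (y, j) \<in> verts (Tn G q n) \<and> (x, y) \<in> edges G \<and>
     (\<forall>A. {x, y} \<subseteq> A \<and> A \<subseteq> verts G \<longrightarrow> i A = j A)"
proof -
  have "(x, y) \<in> edges G \<Longrightarrow> x \<in> verts G \<and> y \<in> verts G"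
    using assms by (auto simp: is_graph_def)
  then show ?thesis unfolding Tn_def verts_def edges_def by (intro iffI) simp_all
qed

lemma Hom_Tn_vertex:
  assumes "\<psi> \<in> Hom F (Tn G q n)" "v \<in> verts F"
  shows "fst (\<psi> v) \<in> verts G"
    and "\<And>A. A \<subseteq> verts G \<Longrightarrow> fst (\<psi> v) \<in> A \<Longrightarrow> real (snd (\<psi> v) A) < real n powr q A"
    and "\<And>A. \<not> (A \<subseteq> verts G \<and> fst (\<psi> v) \<in> A) \<Longrightarrow> snd (\<psi> v) A = 0"
proof -
  have "(fst (\<psi> v), snd (\<psi> v)) \<in> verts (Tn G q n)" using assms by (auto simp: Hom_def)
  then show "fst (\<psi> v) \<in> verts G"
    "\<And>A. A \<subseteq> verts G \<Longrightarrow> fst (\<psi> v) \<in> A \<Longrightarrow> real (snd (\<psi> v) A) < real n powr q A"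
    "\<And>A. \<not> (A \<subseteq> verts G \<and> fst (\<psi> v) \<in> A) \<Longrightarrow> snd (\<psi> v) A = 0"
    unfolding mem_verts_Tn by blast+
qed

section \<open>Labellings\<close>

definition levels :: "real \<Rightarrow> nat set" where
  "levels x = {k. real k < x}"

lemma levels_eq_lessThan: "levels x = {..< nat \<lceil>x\<rceil>}"
proof -
  have "real k < x \<longleftrightarrow> k < nat \<lceil>x\<rceil>" for k
  proof -
    have "real k < x \<longleftrightarrow> int k < \<lceil>x\<rceil>" using less_ceiling_iff[of "int k" x] by simp
    also have "\<dots> \<longleftrightarrow> k < nat \<lceil>x\<rceil>" by linarith
    finally show ?thesis .
  qed
  then show ?thesis by (auto simp: levels_def)
qed

(* Over a fixed \<phi> : F \<rightarrow> G, the extra data of a homomorphism F \<rightarrow> T_n: for every A \<subseteq> V_G,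
   a level below n^q(A) for each component of F restricted to \<phi>\<^sup>-\<^sup>1(A). *)
definition labellings ::
    "'a graph \<Rightarrow> 'b graph \<Rightarrow> ('b set \<Rightarrow> real) \<Rightarrow> nat \<Rightarrow> ('a \<Rightarrow> 'b) \<Rightarrow> ('b set \<Rightarrow> 'a set \<Rightarrow> nat) set" where
  "labellings F G q n \<phi> =
     (\<Pi>\<^sub>E A \<in> Pow (verts G). components F (vertex_preimage F \<phi> A) \<rightarrow>\<^sub>E levels (real n powr q A))"

lemma card_labellings:
  assumes "is_graph F" and "is_graph G"
  shows "card (labellings F G q n \<phi>) =
           (\<Prod>A \<in> Pow (verts G). nat \<lceil>real n powr q A\<rceil> ^ CC (induced F (vertex_preimage F \<phi> A)))"
proof -
  have "finite (Pow (verts G))" "finite (verts F)" using assms by (simp_all add: is_graph_def)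
  moreover have "finite (vertex_preimage F \<phi> A)" if "finite (verts F)" for A
    using that by (simp add: vertex_preimage_def)
  ultimately show ?thesis
    unfolding labellings_def
    by (simp add: card_PiE card_funcsetE finite_components levels_eq_lessThan
                  CC_induced_eq_card_components)
qed

lemma finite_labellings:
  assumes "is_graph F" and "is_graph G"
  shows "finite (labellings F G q n \<phi>)"
proof -
  have "finite (Pow (verts G))" "finite (verts F)" using assms by (simp_all add: is_graph_def)
  then show ?thesis
    unfolding labellings_def levels_eq_lessThan
    by (intro finite_PiE) (simp_all add: finite_components vertex_preimage_def)
qed

section \<open>Homomorphisms into T_n\<close>

definition lift_hom ::
    "'a graph \<Rightarrow> 'b graph \<Rightarrow> ('a \<Rightarrow> 'b) \<Rightarrow> ('b set \<Rightarrow> 'a set \<Rightarrow> nat) \<Rightarrow> 'a \<Rightarrow> 'b \<times> ('b set \<Rightarrow> nat)" where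
  "lift_hom F G \<phi> g = (\<lambda>v \<in> verts F. (\<phi> v, \<lambda>A. if A \<subseteq> verts G \<and> \<phi> v \<in> A
                        then g A (conn F (vertex_preimage F \<phi> A) `` {v}) else 0))"

(* Conversely, the projection of \<psi> : F \<rightarrow> T_n to G and the labelling it induces
   (well defined by Tn_level_const_on_components below). *)
definition base_hom :: "'a graph \<Rightarrow> ('a \<Rightarrow> 'b \<times> ('b set \<Rightarrow> nat)) \<Rightarrow> 'a \<Rightarrow> 'b" where
  "base_hom F \<psi> = restrict (fst \<circ> \<psi>) (verts F)"

definition labelling_of ::
    "'a graph \<Rightarrow> 'b graph \<Rightarrow> ('a \<Rightarrow> 'b \<times> ('b set \<Rightarrow> nat)) \<Rightarrow> 'b set \<Rightarrow> 'a set \<Rightarrow> nat" where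
  "labelling_of F G \<psi> = (\<lambda>A \<in> Pow (verts G). \<lambda>c \<in> components F (vertex_preimage F (base_hom F \<psi>) A).
                           snd (\<psi> (SOME v. v \<in> c)) A)"

(* Levels are constant on components, so the assembled map respects the edge condition of T_n. *)
lemma lift_hom_in_Hom:
  assumes F: "is_graph F" and G: "is_graph G" and \<phi>: "\<phi> \<in> Hom F G"
    and g: "g \<in> labellings F G q n \<phi>"
  shows "lift_hom F G \<phi> g \<in> Hom F (Tn G q n)"
proof -
  let ?comp = "\<lambda>A v. conn F (vertex_preimage F \<phi> A) `` {v}"
  have \<phi>_vert: "\<phi> v \<in> verts G" if "v \<in> verts F" for v using \<phi> that by (auto simp: Hom_def)
  have level: "real (g A (?comp A v)) < real n powr q A"
    if "A \<subseteq> verts G" "v \<in> verts F" "\<phi> v \<in> A" for A v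
  proof -
    have "?comp A v \<in> components F (vertex_preimage F \<phi> A)"
      using that by (intro component_of_vertex) (simp add: vertex_preimage_def)
    then show ?thesis using g that by (auto simp: labellings_def levels_def)
  qed
  have vert: "lift_hom F G \<phi> g v \<in> verts (Tn G q n)" if "v \<in> verts F" for v
    using that level \<phi>_vert by (simp add: lift_hom_def mem_verts_Tn)
  have edge: "(lift_hom F G \<phi> g u, lift_hom F G \<phi> g v) \<in> edges (Tn G q n)"
    if uv: "(u, v) \<in> edges F" for u v
  proof -
    have u: "u \<in> verts F" and v: "v \<in> verts F" using F uv by (auto simp: is_graph_def)
    have same_component: "?comp A u = ?comp A v" if "\<phi> u \<in> A" "\<phi> v \<in> A" for A
    proof -
      have "(u, v) \<in> conn F (vertex_preimage F \<phi> A)"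
        using that u v uv by (intro conn_edge) (auto simp: vertex_preimage_def)
      then show ?thesis by (auto intro: conn_trans conn_sym)
    qed
    have "(\<phi> u, \<phi> v) \<in> edges G" using \<phi> uv by (auto simp: Hom_def)
    then show ?thesis
      using vert[OF u] vert[OF v] u v same_component
      by (simp add: lift_hom_def mem_edges_Tn[OF G])
  qed
  have "lift_hom F G \<phi> g \<in> verts F \<rightarrow>\<^sub>E verts (Tn G q n)"
    using vert by (simp add: lift_hom_def)
  with edge show ?thesis by (auto simp: Hom_def)
qed

lemma lift_hom_inj:
  assumes \<phi>: "\<phi> \<in> Hom F G" and g: "g \<in> labellings F G q n \<phi>"
    and \<phi>': "\<phi>' \<in> Hom F G" and g': "g' \<in> labellings F G q n \<phi>'"
    and eq: "lift_hom F G \<phi> g = lift_hom F G \<phi>' g'"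
  shows "\<phi> = \<phi>'" and "g = g'"
proof -
  show same_base: "\<phi> = \<phi>'"
  proof (rule extensionalityI)
    show "\<phi> \<in> extensional (verts F)" "\<phi>' \<in> extensional (verts F)"
      using \<phi> \<phi>' by (auto simp: Hom_def PiE_iff)
    show "\<phi> v = \<phi>' v" if "v \<in> verts F" for v
      using fun_cong[OF eq, of v] that by (simp add: lift_hom_def)
  qed
  show "g = g'"
  proof (rule extensionalityI)
    show "g \<in> extensional (Pow (verts G))" "g' \<in> extensional (Pow (verts G))"
      using g g' by (simp_all add: labellings_def PiE_iff)
  next
    fix A assume A: "A \<in> Pow (verts G)"
    let ?B = "vertex_preimage F \<phi> A"
    show "g A = g' A"
    proof (rule extensionalityI)
      show "g A \<in> extensional (components F ?B)" "g' A \<in> extensional (components F ?B)"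
        using g g' A same_base by (simp_all add: labellings_def PiE_iff)
    next
      fix c assume c: "c \<in> components F ?B"
      then obtain v where v: "v \<in> ?B" "c = conn F ?B `` {v}" by (rule component_cases)
      have "snd (lift_hom F G \<phi> g v) A = snd (lift_hom F G \<phi>' g' v) A" using eq by simp
      then show "g A c = g' A c" using v A same_base by (simp add: lift_hom_def vertex_preimage_def)
    qed
  qed
qed

(* A homomorphism into T_n has constant level at A along every component of F restricted to
   the preimage of A: an edge of T_n between vertices over A keeps the level at A. *)
lemma Tn_level_const_on_components:
  assumes G: "is_graph G" and \<psi>: "\<psi> \<in> Hom F (Tn G q n)" and A: "A \<subseteq> verts G"
    and uw: "(u, w) \<in> conn F (vertex_preimage F (base_hom F \<psi>) A)"
  shows "snd (\<psi> u) A = snd (\<psi> w) A"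
  using uw unfolding conn_def
proof (induction rule: rtrancl_induct)
  case (step y z)
  have edge_keeps_level: "snd (\<psi> a) A = snd (\<psi> b) A"
    if "(a, b) \<in> edges F" "fst (\<psi> a) \<in> A" "fst (\<psi> b) \<in> A" for a b
  proof -
    have "(\<psi> a, \<psi> b) \<in> edges (Tn G q n)" using \<psi> that(1) by (auto simp: Hom_def)
    then show ?thesis
      using that A by (cases "\<psi> a"; cases "\<psi> b") (simp add: mem_edges_Tn[OF G])
  qed
  from step(2) have "(y, z) \<in> edges F \<or> (z, y) \<in> edges F"
    and "fst (\<psi> y) \<in> A" "fst (\<psi> z) \<in> A"
    by (auto simp: induced_def edges_def vertex_preimage_def base_hom_def)
  then have "snd (\<psi> y) A = snd (\<psi> z) A" using edge_keeps_level by metis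
  with step.IH show ?case by simp
qed simp

lemma base_hom_in_Hom:
  assumes F: "is_graph F" and G: "is_graph G" and \<psi>: "\<psi> \<in> Hom F (Tn G q n)"
  shows "base_hom F \<psi> \<in> Hom F G"
proof -
  have "(fst (\<psi> u), fst (\<psi> v)) \<in> edges G" if "(u, v) \<in> edges F" for u v
  proof -
    have "(\<psi> u, \<psi> v) \<in> edges (Tn G q n)" using \<psi> that by (auto simp: Hom_def)
    then show ?thesis by (cases "\<psi> u"; cases "\<psi> v") (simp add: mem_edges_Tn[OF G])
  qed
  moreover have "u \<in> verts F" "v \<in> verts F" if "(u, v) \<in> edges F" for u v
    using F that by (auto simp: is_graph_def)
  ultimately show ?thesis
    using Hom_Tn_vertex(1)[OF \<psi>] by (auto simp: Hom_def base_hom_def)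
qed

lemma labelling_of_in_labellings:
  assumes \<psi>: "\<psi> \<in> Hom F (Tn G q n)"
  shows "labelling_of F G \<psi> \<in> labellings F G q n (base_hom F \<psi>)"
proof -
  have "snd (\<psi> (SOME v. v \<in> c)) A \<in> levels (real n powr q A)"
    if A: "A \<subseteq> verts G" and c: "c \<in> components F (vertex_preimage F (base_hom F \<psi>) A)" for A c
  proof -
    let ?v = "SOME v. v \<in> c"
    have "?v \<in> vertex_preimage F (base_hom F \<psi>) A"
      using component_subset[OF c] component_some_member[OF c] ..
    then have "?v \<in> verts F" "fst (\<psi> ?v) \<in> A" by (auto simp: vertex_preimage_def base_hom_def)
    then show ?thesis using Hom_Tn_vertex(2)[OF \<psi>] A by (simp add: levels_def)
  qed
  then show ?thesis unfolding labellings_def labelling_of_def by auto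
qed

(* Reassembling \<psi> from its projection and its labelling gives back \<psi>; this is where the
   constancy of levels on components is needed. *)
lemma lift_hom_labelling_of:
  assumes G: "is_graph G" and \<psi>: "\<psi> \<in> Hom F (Tn G q n)"
  shows "lift_hom F G (base_hom F \<psi>) (labelling_of F G \<psi>) = \<psi>"
proof (rule extensionalityI)
  show "lift_hom F G (base_hom F \<psi>) (labelling_of F G \<psi>) \<in> extensional (verts F)"
    by (simp add: lift_hom_def)
  show "\<psi> \<in> extensional (verts F)" using \<psi> by (simp add: Hom_def PiE_iff)
next
  fix v assume v: "v \<in> verts F"
  let ?\<phi> = "base_hom F \<psi>"
  have "snd (lift_hom F G ?\<phi> (labelling_of F G \<psi>) v) A = snd (\<psi> v) A" for A
  proof (cases "A \<subseteq> verts G \<and> fst (\<psi> v) \<in> A")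
    case True
    let ?c = "conn F (vertex_preimage F ?\<phi> A) `` {v}"
    have c: "?c \<in> components F (vertex_preimage F ?\<phi> A)"
      using v True by (intro component_of_vertex) (simp add: vertex_preimage_def base_hom_def)
    have "(v, SOME w. w \<in> ?c) \<in> conn F (vertex_preimage F ?\<phi> A)"
      using component_some_member[OF c] by simp
    then have "snd (\<psi> v) A = snd (\<psi> (SOME w. w \<in> ?c)) A"
      using True by (intro Tn_level_const_on_components[OF G \<psi>]) auto
    then show ?thesis
      using v True c by (simp add: lift_hom_def base_hom_def labelling_of_def)
  next
    case False
    then show ?thesis
      using v Hom_Tn_vertex(3)[OF \<psi> v False] by (auto simp: lift_hom_def base_hom_def)
  qed
  moreover have "fst (lift_hom F G ?\<phi> (labelling_of F G \<psi>) v) = fst (\<psi> v)"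
    using v by (simp add: lift_hom_def base_hom_def)
  ultimately show "lift_hom F G ?\<phi> (labelling_of F G \<psi>) v = \<psi> v"
    by (simp add: prod_eq_iff fun_eq_iff)
qed

lemma bij_betw_lift_hom:
  assumes F: "is_graph F" and G: "is_graph G"
  shows "bij_betw (\<lambda>(\<phi>, g). lift_hom F G \<phi> g) (SIGMA \<phi>:Hom F G. labellings F G q n \<phi>)
           (Hom F (Tn G q n))"
proof (rule bij_betw_byWitness[where f' = "\<lambda>\<psi>. (base_hom F \<psi>, labelling_of F G \<psi>)"])
  show "\<forall>x \<in> (SIGMA \<phi>:Hom F G. labellings F G q n \<phi>).
          (base_hom F (case x of (\<phi>, g) \<Rightarrow> lift_hom F G \<phi> g),
           labelling_of F G (case x of (\<phi>, g) \<Rightarrow> lift_hom F G \<phi> g)) = x"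
  proof safe
    fix \<phi> g assume \<phi>: "\<phi> \<in> Hom F G" and g: "g \<in> labellings F G q n \<phi>"
    let ?\<psi> = "lift_hom F G \<phi> g"
    have \<psi>: "?\<psi> \<in> Hom F (Tn G q n)" by (rule lift_hom_in_Hom[OF F G \<phi> g])
    have "lift_hom F G (base_hom F ?\<psi>) (labelling_of F G ?\<psi>) = ?\<psi>"
      by (rule lift_hom_labelling_of[OF G \<psi>])
    then show "base_hom F ?\<psi> = \<phi>" "labelling_of F G ?\<psi> = g"
      using lift_hom_inj[OF base_hom_in_Hom[OF F G \<psi>] labelling_of_in_labellings[OF \<psi>] \<phi> g]
      by simp_all
  qed
qed (auto simp: lift_hom_labelling_of lift_hom_in_Hom base_hom_in_Hom labelling_of_in_labellings F G)

lemma hom_Tn_eq: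
  assumes F: "is_graph F" and G: "is_graph G"
  shows "hom F (Tn G q n) = (\<Sum>\<phi> \<in> Hom F G.
           \<Prod>A \<in> Pow (verts G). nat \<lceil>real n powr q A\<rceil> ^ CC (induced F (vertex_preimage F \<phi> A)))"
proof -
  have "hom F (Tn G q n) = card (SIGMA \<phi>:Hom F G. labellings F G q n \<phi>)"
    unfolding hom_def using bij_betw_same_card[OF bij_betw_lift_hom[OF F G]] by simp
  also have "\<dots> = (\<Sum>\<phi> \<in> Hom F G. card (labellings F G q n \<phi>))"
    by (simp add: finite_Hom[OF F G] finite_labellings[OF F G])
  finally show ?thesis by (simp add: card_labellings[OF F G])
qed

section \<open>Estimates\<close>

lemma ceiling_bounds:
  fixes x :: real
  assumes "x \<ge> 1"
  shows "x \<le> real (nat \<lceil>x\<rceil>)" and "real (nat \<lceil>x\<rceil>) \<le> 2 * x"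
proof -
  have "real (nat \<lceil>x\<rceil>) = of_int \<lceil>x\<rceil>" using assms by simp
  moreover have "x \<le> of_int \<lceil>x\<rceil>" "of_int \<lceil>x\<rceil> - 1 < x" by (simp_all add: ceiling_correct)
  ultimately show "x \<le> real (nat \<lceil>x\<rceil>)" "real (nat \<lceil>x\<rceil>) \<le> 2 * x" using assms by linarith+
qed

lemma prod_ceiling_powr_bounds:
  fixes q :: "'i \<Rightarrow> real" and k :: "'i \<Rightarrow> nat" and n :: nat
  assumes n: "n \<ge> 1" and q: "\<And>i. i \<in> I \<Longrightarrow> q i \<ge> 0"
  defines "P \<equiv> real (\<Prod>i \<in> I. nat \<lceil>real n powr q i\<rceil> ^ k i)"
  shows "real n powr (\<Sum>i \<in> I. q i * real (k i)) \<le> P"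
    and "P \<le> 2 ^ (\<Sum>i \<in> I. k i) * real n powr (\<Sum>i \<in> I. q i * real (k i))"
proof -
  let ?x = "\<lambda>i. real n powr q i"
  have x_ge_1: "?x i \<ge> 1" if "i \<in> I" for i using n q[OF that] by (simp add: ge_one_powr_ge_zero)
  have "real n powr (\<Sum>i \<in> I. q i * real (k i)) = (\<Prod>i \<in> I. real n powr (q i * real (k i)))"
    using n by (intro powr_sum) simp
  also have "\<dots> = (\<Prod>i \<in> I. ?x i ^ k i)"
    using n by (intro prod.cong refl) (simp add: powr_power mult.commute)
  finally have powr_eq: "real n powr (\<Sum>i \<in> I. q i * real (k i)) = (\<Prod>i \<in> I. ?x i ^ k i)" .
  have P_eq: "P = (\<Prod>i \<in> I. real (nat \<lceil>?x i\<rceil>) ^ k i)" by (simp add: P_def)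
  have factor_bounds:
    "0 \<le> ?x i ^ k i \<and> ?x i ^ k i \<le> real (nat \<lceil>?x i\<rceil>) ^ k i"
    "0 \<le> real (nat \<lceil>?x i\<rceil>) ^ k i \<and> real (nat \<lceil>?x i\<rceil>) ^ k i \<le> (2 * ?x i) ^ k i"
    if i: "i \<in> I" for i
  proof -
    have x_nonneg: "0 \<le> ?x i" by simp
    have ceil_nonneg: "0 \<le> real (nat \<lceil>?x i\<rceil>)" by (rule of_nat_0_le_iff)
    note ceiling = ceiling_bounds[OF x_ge_1[OF i]]
    show "0 \<le> ?x i ^ k i \<and> ?x i ^ k i \<le> real (nat \<lceil>?x i\<rceil>) ^ k i"
      by (intro conjI zero_le_power power_mono x_nonneg ceiling(1))
    show "0 \<le> real (nat \<lceil>?x i\<rceil>) ^ k i \<and> real (nat \<lceil>?x i\<rceil>) ^ k i \<le> (2 * ?x i) ^ k i"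
      by (intro conjI zero_le_power power_mono ceil_nonneg ceiling(2))
  qed
  show "real n powr (\<Sum>i \<in> I. q i * real (k i)) \<le> P"
    unfolding powr_eq P_eq using factor_bounds(1) by (rule prod_mono)
  have "P \<le> (\<Prod>i \<in> I. (2 * ?x i) ^ k i)"
    unfolding P_eq using factor_bounds(2) by (rule prod_mono)
  also have "\<dots> = 2 ^ (\<Sum>i \<in> I. k i) * (\<Prod>i \<in> I. ?x i ^ k i)"
    by (simp add: power_mult_distrib prod.distrib power_sum)
  finally show "P \<le> 2 ^ (\<Sum>i \<in> I. k i) * real n powr (\<Sum>i \<in> I. q i * real (k i))"
    unfolding powr_eq .
qed

lemma log_tendsto_of_powr_sandwich:
  fixes h :: "nat \<Rightarrow> real" and S D :: real
  assumes bounds: "\<forall>\<^sub>F n in sequentially. real n powr S \<le> h n \<and> h n \<le> D * real n powr S"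
  shows "(\<lambda>n. log (real n) (h n)) \<longlonglongrightarrow> S"
proof -
  have lower: "\<forall>\<^sub>F n in sequentially. S \<le> log (real n) (h n)"
    using bounds eventually_ge_at_top[of 2]
  proof eventually_elim
    case (elim n)
    then have n: "real n \<ge> 2" and pos: "0 < real n powr S" by simp_all
    have "S = log (real n) (real n powr S)" using n by simp
    also have "\<dots> \<le> log (real n) (h n)" by (rule log_mono) (use n pos elim in linarith)+
    finally show ?case .
  qed
  have upper: "\<forall>\<^sub>F n in sequentially. log (real n) (h n) \<le> S + ln D / ln (real n)"
    using bounds eventually_ge_at_top[of 2]
  proof eventually_elim
    case (elim n)
    then have n: "real n \<ge> 2" and pos: "0 < real n powr S" by simp_all
    have "real n powr S \<le> D * real n powr S" using elim by linarith
    then have D_pos: "D > 0" using pos by (simp add: mult_le_cancel_right1)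
    have "log (real n) (h n) \<le> log (real n) (D * real n powr S)"
      by (rule log_mono) (use n pos elim in linarith)+
    also have "\<dots> = log (real n) D + S" using n D_pos by (simp add: log_mult)
    also have "\<dots> = S + ln D / ln (real n)" by (simp add: log_def)
    finally show ?case .
  qed
  have "filterlim (\<lambda>n. ln (real n)) at_infinity sequentially"
    by (rule filterlim_at_top_imp_at_infinity,
        rule filterlim_compose[OF ln_at_top filterlim_real_sequentially])
  then have "(\<lambda>n. S + ln D / ln (real n)) \<longlonglongrightarrow> S + 0"
    by (intro tendsto_add tendsto_const tendsto_divide_0[OF tendsto_const])
  then have "(\<lambda>n. S + ln D / ln (real n)) \<longlonglongrightarrow> S" by simp
  then show ?thesis by (rule tendsto_sandwich[OF lower upper tendsto_const])
qed

lemma log_sum_tendsto_Max: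
  fixes a :: "'i \<Rightarrow> nat \<Rightarrow> real" and s C :: "'i \<Rightarrow> real"
  assumes I: "finite I" "I \<noteq> {}"
    and bounds: "\<And>i n. i \<in> I \<Longrightarrow> n \<ge> 1 \<Longrightarrow>
                   real n powr s i \<le> a i n \<and> a i n \<le> C i * real n powr s i"
  shows "(\<lambda>n. log (real n) (\<Sum>i \<in> I. a i n)) \<longlonglongrightarrow> Max (s ` I)"
proof -
  define S where "S = Max (s ` I)"
  have "S \<in> s ` I" unfolding S_def using I by (intro Max_in) auto
  then obtain i0 where i0: "i0 \<in> I" "s i0 = S" by auto
  have s_le: "s i \<le> S" if "i \<in> I" for i using I that by (simp add: S_def)
  have "\<forall>\<^sub>F n in sequentially. real n powr S \<le> (\<Sum>i \<in> I. a i n) \<and>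
          (\<Sum>i \<in> I. a i n) \<le> (\<Sum>i \<in> I. C i) * real n powr S"
    using eventually_ge_at_top[of 1]
  proof eventually_elim
    case (elim n)
    have a_nonneg: "0 \<le> a i n" if "i \<in> I" for i
      using bounds[OF that elim] powr_ge_zero[of "real n" "s i"] by linarith
    have "real n powr S \<le> a i0 n" using bounds[OF i0(1) elim] i0 by simp
    also have "\<dots> \<le> (\<Sum>i \<in> I. a i n)" using I i0 a_nonneg by (intro member_le_sum) auto
    finally have lower: "real n powr S \<le> (\<Sum>i \<in> I. a i n)" .
    have "a i n \<le> C i * real n powr S" if i: "i \<in> I" for i
    proof -
      have "real n powr s i \<le> C i * real n powr s i" using bounds[OF i elim] by linarith
      moreover have "0 < real n powr s i" using elim by simp
      ultimately have "0 \<le> C i" by (simp add: mult_le_cancel_right1)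
      moreover have "real n powr s i \<le> real n powr S" using elim s_le[OF i] by (intro powr_mono) auto
      ultimately have "C i * real n powr s i \<le> C i * real n powr S" by (simp add: mult_left_mono)
      then show ?thesis using bounds[OF i elim] by linarith
    qed
    then have "(\<Sum>i \<in> I. a i n) \<le> (\<Sum>i \<in> I. C i) * real n powr S"
      by (simp add: sum_distrib_right sum_mono)
    with lower show ?case by simp
  qed
  then show ?thesis unfolding S_def by (rule log_tendsto_of_powr_sandwich)
qed

theorem corollary6p2:
  fixes F :: "'a graph" and G :: "'b graph" and q :: "'b set \<Rightarrow> real"
  assumes "is_graph F" and "is_graph G" and "q \<in> Qset G" and "F \<rightarrow>\<^sub>G G"
  shows "(\<lambda>n. log (real n) (real (hom F (Tn G q n))))
           \<longlonglongrightarrow> Max ((\<lambda>\<phi>. \<Sum>A \<in> Pow (verts G).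
                     q A * real (CC (induced F {v \<in> verts F. \<phi> v \<in> A}))) ` Hom F G)"
proof -
  note F = assms(1) and G = assms(2)
  define k :: "('a \<Rightarrow> 'b) \<Rightarrow> 'b set \<Rightarrow> nat"
    where "k \<phi> A = CC (induced F (vertex_preimage F \<phi> A))" for \<phi> A
  define a where "a \<phi> n = real (\<Prod>A \<in> Pow (verts G). nat \<lceil>real n powr q A\<rceil> ^ k \<phi> A)" for \<phi> n
  define s where "s \<phi> = (\<Sum>A \<in> Pow (verts G). q A * real (k \<phi> A))" for \<phi>
  have q_nonneg: "\<And>A. A \<in> Pow (verts G) \<Longrightarrow> q A \<ge> 0" using assms(3) by (auto simp: Qset_def)
  have Hom_nonempty: "Hom F G \<noteq> {}"
  proof
    assume "Hom F G = {}"
    then show False using assms(4) by (simp add: maps_to_def hom_def)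
  qed
  have count: "real (hom F (Tn G q n)) = (\<Sum>\<phi> \<in> Hom F G. a \<phi> n)" for n
    unfolding hom_Tn_eq[OF F G] a_def k_def by (rule of_nat_sum)
  have "real n powr s \<phi> \<le> a \<phi> n \<and> a \<phi> n \<le> 2 ^ (\<Sum>A \<in> Pow (verts G). k \<phi> A) * real n powr s \<phi>"
    if "n \<ge> 1" for \<phi> n
    unfolding a_def s_def using prod_ceiling_powr_bounds[OF that q_nonneg] by (rule conjI)
  then have "(\<lambda>n. log (real n) (\<Sum>\<phi> \<in> Hom F G. a \<phi> n)) \<longlonglongrightarrow> Max (s ` Hom F G)"
    by (rule log_sum_tendsto_Max[OF finite_Hom[OF F G] Hom_nonempty])
  then show ?thesis unfolding count s_def k_def vertex_preimage_def .
qed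

end
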